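(* Let $\eta>0$, $\beta\in\mathbb{R}$ and $\gamma\ge\eta$. Let $\widehat{\mathcal{L}}_1,\widehat{\mathcal{L}}_2\in\mathbb{R}^{N\times N}$ satisfy $\langle \widehat{\mathcal{L}}_i\mathbf{x},\mathbf{x}\rangle\le 0$ for all $\mathbf{x}\in\mathbb{R}^N$, $i=1,2$. Define $$\mathcal{P}_{\gamma}:=\left[\eta I-\widehat{\mathcal{L}}_2+\beta^2(\eta I-\widehat{\mathcal{L}}_1)^{-1}\right](\gamma I-\widehat{\mathcal{L}}_2)^{-1}.$$ Then $\|\mathcal{P}_\gamma\|\le 1+\dfrac{\beta^2}{\gamma\eta}$.
   Context: $\langle\cdot,\cdot\rangle$ is the Euclidean inner product on $\mathbb{R}^N$ and $\|\cdot\|$ the induced operator two-norm. The matrices $\eta I-\widehat{\mathcal{L}}_1$ and $\gamma I-\widehat{\mathcal{L}}_2$ are invertible under the stated hypotheses. *)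

theory Defs
  imports "HOL-Analysis.Analysis"
begin

end

theory Submission
  imports Defs
begin

text \<open>Write \<open>A\<^sub>c = c I - L\<close> for a dissipative matrix \<open>L\<close> and \<open>c > 0\<close>. Then
  \<open>\<langle>A\<^sub>c x, x\<rangle> \<ge> c \<parallel>x\<parallel>\<^sup>2\<close>, so \<open>A\<^sub>c\<close> is invertible with \<open>\<parallel>A\<^sub>c\<^sup>-\<^sup>1\<parallel> \<le> 1/c\<close>, and
  \<open>x = A\<^sub>\<gamma>\<^sup>-\<^sup>1 y\<close> satisfies \<open>\<langle>x, y\<rangle> \<ge> \<gamma> \<parallel>x\<parallel>\<^sup>2\<close>. Since \<open>(\<eta> I - L\<^sub>2) A\<^sub>\<gamma>\<^sup>-\<^sup>1 y = y - (\<gamma> - \<eta>) x\<close>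
  and \<open>0 \<le> \<gamma> - \<eta> \<le> 2\<gamma>\<close>, the first summand of \<open>P\<^sub>\<gamma> y\<close> has norm at most \<open>\<parallel>y\<parallel>\<close>; the
  second, \<open>\<beta>\<^sup>2 A\<^sub>\<eta>\<^sup>-\<^sup>1 x\<close>, has norm at most \<open>\<beta>\<^sup>2 \<parallel>y\<parallel> / (\<gamma> \<eta>)\<close>.\<close>

definition dissipative :: "real^'n^'n \<Rightarrow> bool"
  where "dissipative L \<longleftrightarrow> (\<forall>x. (L *v x) \<bullet> x \<le> 0)"

lemma scaleR_mat_1_mult_vec: "(c *\<^sub>R mat 1) *v x = c *\<^sub>R (x :: real^'n)"
  by (metis scaleR_matrix_vector_assoc matrix_vector_mul_lid)

lemma matrix_inv_right:
  fixes A :: "'a::field^'n^'n"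
  assumes "invertible A"
  shows "A ** matrix_inv A = mat 1"
proof -
  have "A ** matrix_inv A = mat 1 \<and> matrix_inv A ** A = mat 1"
    using assms unfolding invertible_def matrix_inv_def by (rule someI_ex)
  then show ?thesis ..
qed

lemma matrix_inv_mult_vec_right:
  fixes A :: "'a::field^'n^'n"
  assumes "invertible A"
  shows "A *v (matrix_inv A *v y) = y"
  by (simp add: matrix_vector_mul_assoc matrix_inv_right[OF assms])

lemma coercive_norm_le:
  fixes A :: "real^'n^'n"
  assumes "c > 0" and "(A *v x) \<bullet> x \<ge> c * norm x ^ 2"
  shows "norm x \<le> norm (A *v x) / c"
proof -
  have "c * norm x ^ 2 \<le> norm x * norm (A *v x)"
    using assms(2) Cauchy_Schwarz_ineq2[of "A *v x" x] by (simp add: mult.commute)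
  then have "c * norm x \<le> norm (A *v x)"
    by (cases "norm x = 0") (auto simp: power2_eq_square)
  with assms(1) show ?thesis
    by (simp add: field_simps)
qed

lemma coercive_invertible:
  fixes A :: "real^'n^'n"
  assumes "c > 0" and "\<And>x. (A *v x) \<bullet> x \<ge> c * norm x ^ 2"
  shows "invertible A"
proof -
  have "\<forall>x. A *v x = 0 \<longrightarrow> x = 0"
    using coercive_norm_le[OF assms(1) assms(2)] by (metis div_0 norm_le_zero_iff norm_zero)
  then show ?thesis
    using matrix_left_invertible_ker invertible_left_inverse by blast
qed

lemma dissipative_shift_coercive:
  assumes "dissipative L"
  shows "((c *\<^sub>R mat 1 - L) *v x) \<bullet> x \<ge> c * norm x ^ 2"
proof -
  have "((c *\<^sub>R mat 1 - L) *v x) \<bullet> x = c * (x \<bullet> x) - (L *v x) \<bullet> x"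
    by (simp add: matrix_vector_mult_diff_rdistrib scaleR_mat_1_mult_vec inner_diff_left)
  with assms show ?thesis
    by (simp add: dissipative_def power2_norm_eq_inner)
qed

lemma dissipative_shift_invertible:
  assumes "dissipative L" and "c > 0"
  shows "invertible (c *\<^sub>R mat 1 - L)"
  using coercive_invertible[OF assms(2) dissipative_shift_coercive[OF assms(1)]] .

lemma dissipative_resolvent_inner_ge:
  assumes "dissipative L" and "c > 0"
  shows "(matrix_inv (c *\<^sub>R mat 1 - L) *v y) \<bullet> y
           \<ge> c * norm (matrix_inv (c *\<^sub>R mat 1 - L) *v y) ^ 2"
  using dissipative_shift_coercive[OF assms(1), of c "matrix_inv (c *\<^sub>R mat 1 - L) *v y"]
  by (simp add: matrix_inv_mult_vec_right[OF dissipative_shift_invertible[OF assms(1,2)]]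
      inner_commute)

lemma dissipative_resolvent_norm_le:
  assumes "dissipative L" and "c > 0"
  shows "norm (matrix_inv (c *\<^sub>R mat 1 - L) *v y) \<le> norm y / c"
  using coercive_norm_le[OF assms(2) dissipative_shift_coercive[OF assms(1)],
      of "matrix_inv (c *\<^sub>R mat 1 - L) *v y"]
  by (simp add: matrix_inv_mult_vec_right[OF dissipative_shift_invertible[OF assms]])

text \<open>Expanding the square, \<open>\<parallel>y - d x\<parallel>\<^sup>2 \<le> \<parallel>y\<parallel>\<^sup>2 + d (d - 2\<gamma>) \<parallel>x\<parallel>\<^sup>2\<close>.\<close>

lemma norm_diff_scaleR_le:
  fixes x y :: "'a::real_inner"
  assumes "x \<bullet> y \<ge> \<gamma> * norm x ^ 2" and "0 \<le> d" and "d \<le> 2 * \<gamma>"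
  shows "norm (y - d *\<^sub>R x) \<le> norm y"
proof -
  have "norm (y - d *\<^sub>R x) ^ 2 = (y - d *\<^sub>R x) \<bullet> (y - d *\<^sub>R x)"
    by (rule power2_norm_eq_inner)
  also have "\<dots> = y \<bullet> y - 2 * d * (x \<bullet> y) + d\<^sup>2 * (x \<bullet> x)"
    by (simp add: inner_diff_left inner_diff_right inner_commute[of y x]
        power2_eq_square right_diff_distrib)
  also have "\<dots> = norm y ^ 2 - 2 * d * (x \<bullet> y) + d\<^sup>2 * norm x ^ 2"
    by (simp add: power2_norm_eq_inner)
  also have "\<dots> \<le> norm y ^ 2 - 2 * d * (\<gamma> * norm x ^ 2) + d\<^sup>2 * norm x ^ 2"
    using assms(1,2) by (simp add: mult_left_mono)
  also have "\<dots> = norm y ^ 2 + d * (d - 2 * \<gamma>) * norm x ^ 2"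
    by (simp add: algebra_simps power2_eq_square)
  also have "\<dots> \<le> norm y ^ 2"
    using assms(2,3) by (simp add: mult_nonneg_nonpos mult_nonpos_nonneg)
  finally show ?thesis
    using power2_le_imp_le by fastforce
qed

theorem mainTheorem2:
  fixes L1 L2 :: "real^'n^'n" and \<eta> \<beta> \<gamma> :: real
  assumes "\<eta> > 0" and "\<gamma> \<ge> \<eta>"
    and "\<forall>x. (L1 *v x) \<bullet> x \<le> 0"
    and "\<forall>x. (L2 *v x) \<bullet> x \<le> 0"
  shows "onorm (\<lambda>x. ((\<eta> *\<^sub>R mat 1 - L2 + \<beta>\<^sup>2 *\<^sub>R matrix_inv (\<eta> *\<^sub>R mat 1 - L1))
                    ** matrix_inv (\<gamma> *\<^sub>R mat 1 - L2)) *v x)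
         \<le> 1 + \<beta>\<^sup>2 / (\<gamma> * \<eta>)"
proof (rule onorm_le)
  fix y :: "real^'n"
  have L1: "dissipative L1" and L2: "dissipative L2" and "\<gamma> > 0"
    using assms by (auto simp: dissipative_def)
  define x where "x = matrix_inv (\<gamma> *\<^sub>R mat 1 - L2) *v y"
  define R where "R = matrix_inv (\<eta> *\<^sub>R mat 1 - L1)"
  have "(\<gamma> *\<^sub>R mat 1 - L2) *v x = y"
    unfolding x_def by (rule matrix_inv_mult_vec_right[OF dissipative_shift_invertible[OF L2 \<open>\<gamma> > 0\<close>]])
  then have split: "((\<eta> *\<^sub>R mat 1 - L2 + \<beta>\<^sup>2 *\<^sub>R R) ** matrix_inv (\<gamma> *\<^sub>R mat 1 - L2)) *v y
      = (y - (\<gamma> - \<eta>) *\<^sub>R x) + \<beta>\<^sup>2 *\<^sub>R (R *v x)"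
    by (simp add: x_def[symmetric] matrix_vector_mul_assoc[symmetric] matrix_vector_mult_add_rdistrib
        matrix_vector_mult_diff_rdistrib scaleR_mat_1_mult_vec scaleR_matrix_vector_assoc algebra_simps)
  have "norm (y - (\<gamma> - \<eta>) *\<^sub>R x) \<le> norm y"
    using norm_diff_scaleR_le[OF dissipative_resolvent_inner_ge[OF L2 \<open>\<gamma> > 0\<close>, of y]] assms(1,2)
    unfolding x_def by simp
  moreover have "norm (R *v x) \<le> norm y / (\<gamma> * \<eta>)"
  proof -
    have "norm (R *v x) \<le> norm x / \<eta>"
      unfolding R_def by (rule dissipative_resolvent_norm_le[OF L1 assms(1)])
    also have "\<dots> \<le> norm y / \<gamma> / \<eta>"
      unfolding x_def using assms(1)
      by (intro divide_right_mono dissipative_resolvent_norm_le[OF L2 \<open>\<gamma> > 0\<close>]) simp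
    finally show ?thesis by simp
  qed
  ultimately have "norm ((y - (\<gamma> - \<eta>) *\<^sub>R x) + \<beta>\<^sup>2 *\<^sub>R (R *v x)) \<le> norm y + \<beta>\<^sup>2 * (norm y / (\<gamma> * \<eta>))"
    by (smt (verit) mult_left_mono norm_scaleR norm_triangle_ineq zero_le_power2 abs_of_nonneg)
  then show "norm (((\<eta> *\<^sub>R mat 1 - L2 + \<beta>\<^sup>2 *\<^sub>R matrix_inv (\<eta> *\<^sub>R mat 1 - L1))
                    ** matrix_inv (\<gamma> *\<^sub>R mat 1 - L2)) *v y) \<le> (1 + \<beta>\<^sup>2 / (\<gamma> * \<eta>)) * norm y"
    using split unfolding R_def by (simp add: distrib_right)
qed

end
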